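(* Let $X_n(d_1)\subset\mathbb{C}P^{n+1}$ be a nonsingular complex hypersurface of degree $d_1$ with $c_1=n+2-d_1<0$. Then $(-1)^n{\rm Td}(X_n(d_1))\geqslant n+1$.
   Context: The Todd genus of a compact complex $n$-manifold $M$ with formal Chern roots $x_1,\dots,x_n$ is ${\rm Td}(M)=\big(\prod_i\frac{x_i}{1-e^{-x_i}}\big)[M]$. *)

theory Defs
  imports Complex_Main "HOL-Computational_Algebra.Formal_Power_Series"
begin

text \<open>Power series in the hyperplane class h: the Todd series Q(x) = x / (1 - e^(-x)),
  written as the inverse of (1 - e^(-x))/x.\<close>
definition todd_series :: "real fps" where
  "todd_series = inverse (fps_shift 1 (1 - fps_exp (-1)))"

text \<open>The tangent bundle satisfies TX + O(d)|X = (n+2) H|X, so with h the hyperplane class,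
  Td(X) = Q(h)^(n+2) / Q(d h), and evaluating a degree-n class c h^n on [X] gives d c
  (since h^n[X] = d).  Here Q(dh)^(-1) = (1 - e^(-dh))/(dh).\<close>
definition todd_genus_hypersurface :: "nat \<Rightarrow> nat \<Rightarrow> real" where
  "todd_genus_hypersurface n d =
     real d * fps_nth (todd_series ^ (n + 2) *
        (fps_const (1 / real d) * fps_shift 1 (1 - fps_exp (- real d)))) n"

end

theory Submission
  imports Defs
begin

(* Write B = 1 - e^(-x) = x A, so that the Todd series is Q = 1/A.  Then
   Td(X_n(d)) = [x^(n+1)] Q^(n+2) (1 - (1 - B)^d), and the binomial expansion of (1 - B)^d
   reduces everything to the coefficients [x^(n+1)] Q^(n+2) B^k = [x^(n+1-k)] Q^(n+2-k).
   These all equal 1, because [x^p] Q^(p+1) = 1 for every p (the Todd genus of CP^p): it is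
   the residue of B^(-p-1), which does not change under p -> p - 1 since the residue of a
   derivative vanishes.  Hence Td(X_n(d)) = sum_{k=1}^{n+1} (-1)^(k+1) C(d,k)
   = 1 + (-1)^n C(d-1,n+1), and for d >= n + 3 the binomial coefficient is at least n + 2. *)

unbundle fps_syntax

lemma fps_X_mult_deriv_nth:
  fixes f :: "'a::comm_semiring_1 fps"
  shows "(fps_X * fps_deriv f) $ n = of_nat n * f $ n"
  by (cases n) simp_all

lemma one_minus_power_one_minus:
  fixes b :: "'a::comm_ring_1"
  shows "1 - (1 - b) ^ d = (\<Sum>k=1..d. (-1) ^ (k + 1) * of_nat (d choose k) * b ^ k)"
proof -
  have "(1 - b) ^ d = (\<Sum>k\<le>d. of_nat (d choose k) * (- b) ^ k)"
    using binomial_ring[of "- b" 1 d] by simp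
  also have "\<dots> = 1 + (\<Sum>k=1..d. of_nat (d choose k) * (- b) ^ k)"
    by (simp add: atMost_atLeast0 sum.atLeast_Suc_atMost)
  finally have "1 - (1 - b) ^ d = - (\<Sum>k=1..d. of_nat (d choose k) * (- b) ^ k)"
    by simp
  also have "\<dots> = (\<Sum>k=1..d. (-1) ^ (k + 1) * of_nat (d choose k) * b ^ k)"
    unfolding sum_negf[symmetric] by (rule sum.cong) (simp_all add: power_minus[of b])
  finally show ?thesis .
qed

definition todd_recip :: "real fps" where
  "todd_recip = fps_shift 1 (1 - fps_exp (-1))"

lemma todd_recip_nth_0: "todd_recip $ 0 = 1"
  by (simp add: todd_recip_def)

lemma fps_X_mult_todd_recip: "fps_X * todd_recip = 1 - fps_exp (-1)"
  by (rule fps_ext) (simp add: todd_recip_def)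

lemma todd_series_mult_recip: "todd_series * todd_recip = 1"
  unfolding todd_series_def todd_recip_def[symmetric]
  by (rule inverse_mult_eq_1) (simp add: todd_recip_nth_0)

lemma fps_exp_neg_one_eq_todd_recip: "fps_exp (-1) = todd_recip + fps_X * fps_deriv todd_recip"
proof -
  have "fps_deriv (fps_X * todd_recip) = fps_exp (-1)"
    by (rule fps_ext) (simp add: fps_X_mult_todd_recip)
  then show ?thesis by (simp add: algebra_simps)
qed

lemma fps_X_mult_deriv_todd_series_power:
  "fps_X * fps_deriv (todd_series ^ m)
     = of_nat m * (todd_series ^ m - todd_series ^ (m + 1) * fps_exp (-1))"
proof -
  have deriv_todd_series: "fps_deriv todd_series = - fps_deriv todd_recip * todd_series ^ 2"
    unfolding todd_series_def todd_recip_def[symmetric]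
    by (rule fps_inverse_deriv) (simp add: todd_recip_nth_0)
  have "fps_deriv (todd_series ^ m)
      = - of_nat m * todd_series ^ (m + 1) * fps_deriv todd_recip"
  proof (cases m)
    case (Suc k)
    have "fps_deriv (todd_series ^ m) = of_nat m * fps_deriv todd_series * todd_series ^ k"
      by (simp only: fps_deriv_power' Suc diff_Suc_1)
    also have "\<dots> = - of_nat m * todd_series ^ (m + 1) * fps_deriv todd_recip"
      unfolding deriv_todd_series by (simp add: Suc power2_eq_square algebra_simps)
    finally show ?thesis .
  qed simp
  moreover have "todd_series ^ (m + 1) * todd_recip = todd_series ^ m"
    using todd_series_mult_recip by (simp add: algebra_simps)
  ultimately show ?thesis
    by (simp add: fps_exp_neg_one_eq_todd_recip algebra_simps)
qed

(* The vanishing residue of the derivative of B^(-m), in power series form. *)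
lemma todd_series_power_mult_exp_nth:
  assumes "m > 0"
  shows "(todd_series ^ (m + 1) * fps_exp (-1)) $ m = 0"
proof -
  have "real m * todd_series ^ m $ m = (fps_X * fps_deriv (todd_series ^ m)) $ m"
    by (simp only: fps_X_mult_deriv_nth of_nat_id)
  also have "\<dots> = real m * (todd_series ^ m $ m - (todd_series ^ (m + 1) * fps_exp (-1)) $ m)"
    by (simp only: fps_X_mult_deriv_todd_series_power fps_mult_of_nat_nth fps_sub_nth)
  finally show ?thesis
    using assms by (simp add: right_diff_distrib)
qed

lemma todd_series_power_nth: "todd_series ^ (p + 1) $ p = 1"
proof (induction p)
  case 0
  then show ?case
    by (simp add: todd_series_def todd_recip_def[symmetric] todd_recip_nth_0)
next
  case (Suc p)
  have "todd_series ^ (Suc p + 1) = todd_series ^ (Suc p + 1) * (fps_exp (-1) + fps_X * todd_recip)"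
    by (simp add: fps_X_mult_todd_recip)
  also have "\<dots> = todd_series ^ (Suc p + 1) * fps_exp (-1) + fps_X * todd_series ^ (p + 1)"
    using todd_series_mult_recip by (simp add: algebra_simps)
  finally have "todd_series ^ (Suc p + 1) $ Suc p
      = (todd_series ^ (Suc p + 1) * fps_exp (-1) + fps_X * todd_series ^ (p + 1)) $ Suc p"
    by (rule arg_cong[where f = "\<lambda>F. F $ Suc p"])
  also have "\<dots> = (todd_series ^ (Suc p + 1) * fps_exp (-1)) $ Suc p + todd_series ^ (p + 1) $ p"
    by simp
  also have "\<dots> = 1"
    using todd_series_power_mult_exp_nth[of "Suc p"] Suc.IH by simp
  finally show ?case .
qed

lemma todd_series_power_mult_nth:
  assumes "k \<ge> 1"
  shows "(todd_series ^ (n + 2) * (1 - fps_exp (-1)) ^ k) $ (n + 1) = of_bool (k \<le> n + 1)"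
proof (cases "k \<le> n + 1")
  case True
  define j where "j = n + 1 - k"
  have j: "n + 2 = (j + 1) + k"
    using True by (simp add: j_def)
  have "todd_series ^ (n + 2) * (1 - fps_exp (-1)) ^ k
      = fps_X ^ k * (todd_series ^ (j + 1) * (todd_series * todd_recip) ^ k)"
    unfolding j fps_X_mult_todd_recip[symmetric] power_mult_distrib power_add by (simp only: ac_simps)
  also have "\<dots> = fps_X ^ k * todd_series ^ (j + 1)"
    by (simp add: todd_series_mult_recip)
  finally show ?thesis
    using True j_def todd_series_power_nth[of j]
    by (simp only: fps_X_power_mult_nth) simp
next
  case False
  then show ?thesis
    by (simp add: fps_X_mult_todd_recip[symmetric] power_mult_distrib fps_X_power_mult_nth mult.left_commute)
qed

lemma todd_genus_hypersurface_eq_nth: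
  assumes "d \<ge> 1"
  shows "todd_genus_hypersurface n d = (todd_series ^ (n + 2) * (1 - fps_exp (-1) ^ d)) $ (n + 1)"
proof -
  define S where "S = fps_shift 1 (1 - fps_exp (-1) ^ d :: real fps)"
  have S: "fps_X * S = 1 - fps_exp (-1) ^ d"
    by (rule fps_ext) (simp add: S_def fps_nth_power_0)
  have "todd_genus_hypersurface n d = (todd_series ^ (n + 2) * S) $ n"
    using assms by (simp add: todd_genus_hypersurface_def S_def fps_exp_power_mult mult.left_commute)
  also have "\<dots> = (todd_series ^ (n + 2) * (fps_X * S)) $ (n + 1)"
    by (simp add: mult.left_commute)
  finally show ?thesis
    by (simp only: S)
qed

lemma todd_genus_hypersurface_eq:
  assumes "d \<ge> 1"
  shows "todd_genus_hypersurface n d = 1 + (-1) ^ n * real ((d - 1) choose (n + 1))"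
proof -
  define c where "c k = (-1) ^ (k + 1) * real (d choose k)" for k
  have "fps_const (c k) = (-1) ^ (k + 1) * of_nat (d choose k)" for k
    by (simp only: c_def fps_const_mult[symmetric] fps_of_nat fps_const_neg[symmetric]
        fps_const_1_eq_1 fps_const_power[symmetric])
  then have "1 - fps_exp (-1) ^ d = (\<Sum>k=1..d. fps_const (c k) * (1 - fps_exp (-1)) ^ k)"
    using one_minus_power_one_minus[of "1 - fps_exp (-1 :: real)" d] by simp
  then have "todd_genus_hypersurface n d
      = (\<Sum>k=1..d. c k * (todd_series ^ (n + 2) * (1 - fps_exp (-1)) ^ k) $ (n + 1))"
    by (simp only: todd_genus_hypersurface_eq_nth[OF assms] sum_distrib_left fps_sum_nth
        mult.left_commute[of _ "fps_const _"] fps_mult_left_const_nth)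
  also have "\<dots> = (\<Sum>k=1..d. c k * of_bool (k \<le> n + 1))"
    by (rule sum.cong) (simp_all only: atLeastAtMost_iff todd_series_power_mult_nth)
  also have "\<dots> = (\<Sum>k=1..d + n + 1. c k * of_bool (k \<le> n + 1))"
    by (rule sum.mono_neutral_left) (auto simp: c_def)
  also have "\<dots> = (\<Sum>k=1..n + 1. c k)"
    by (rule sum.mono_neutral_cong_right) auto
  also have "\<dots> = 1 - (\<Sum>k\<le>n + 1. (-1) ^ k * real (d choose k))"
    by (simp add: c_def atMost_atLeast0 sum.atLeast_Suc_atMost sum_negf[symmetric])
  also have "(\<Sum>k\<le>n + 1. (-1) ^ k * real (d choose k)) = (-1) ^ (n + 1) * real ((d - 1) choose (n + 1))"
    using gbinomial_sum_lower_neg[of "real d" "n + 1"] assms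
    by (simp add: binomial_gbinomial of_nat_diff mult.commute)
  finally show ?thesis
    by simp
qed

theorem lemma3p2:
  fixes n d :: nat
  assumes "d \<ge> 1"
    and "int n + 2 - int d < 0"
  shows "(-1) ^ n * todd_genus_hypersurface n d \<ge> real n + 1"
proof -
  have "(n + 2) choose (n + 1) \<le> (d - 1) choose (n + 1)"
    using assms(2) by (intro binomial_right_mono) linarith
  then have "real n + 2 \<le> real ((d - 1) choose (n + 1))"
    using binomial_symmetric[of 1 "n + 2"] by simp
  moreover have "(-1) ^ n * todd_genus_hypersurface n d = (-1) ^ n + real ((d - 1) choose (n + 1))"
    by (simp add: todd_genus_hypersurface_eq[OF assms(1)] algebra_simps flip: power_add mult_2)
  moreover have "(-1 :: real) ^ n \<ge> -1"
    by (cases "even n") simp_all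
  ultimately show ?thesis
    by linarith
qed

end
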